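(* There is an absolute constant $C>0$ such that for every finite graph $G=(V,E)$ with maximum degree $\Delta$ and every $r\in\mathbb{N}$, $r\ge1$, every output $D$ of the algorithm Ratio on $(G,r)$ (for any tie-breaking) is an $r$-dominating set satisfying $$\overline{\mathrm{cong}}_r(D)\le C\cdot\max\bigl(1,\sqrt{\Delta^r}\bigr)\cdot \mathrm{mac}^r(G).$$ That is, Ratio is an $\mathcal{O}(\sqrt{\Delta^r})$-approximation algorithm for Minimum Congestion $r$-Dominating Set.
   Context: $N^r[v]$ is the set of vertices at distance at most $r$ from $v$, and $N^r[D]=\bigcup_{x\in D}N^r[x]$. $D$ is $r$-dominating if $N^r[D]=V$. The average $r$-congestion of $S$ is $\overline{\mathrm{cong}}_r(S)=\frac{1}{|V|}\sum_{v\in V}|N^r[v]\cap S|$, and $\mathrm{mac}^r(G)$ is its minimum over $r$-dominating sets. The algorithm Ratio starts with $D=\emptyset$ and, while $N^r[D]\ne V$, adds to $D$ a vertex $v$ maximizing $\frac{|N^r[v]\setminus N^r[D]|}{|N^r[v]|}$, breaking ties arbitrarily; it outputs $D$. *)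

theory Defs
  imports Complex_Main
begin

definition simple_graph :: "'a set \<Rightarrow> ('a \<Rightarrow> 'a \<Rightarrow> bool) \<Rightarrow> bool" where
  "simple_graph V E \<longleftrightarrow> finite V \<and> (\<forall>u v. E u v \<longrightarrow> u \<in> V \<and> v \<in> V)
     \<and> (\<forall>u v. E u v \<longrightarrow> E v u) \<and> (\<forall>v. \<not> E v v)"

definition degree :: "'a set \<Rightarrow> ('a \<Rightarrow> 'a \<Rightarrow> bool) \<Rightarrow> 'a \<Rightarrow> nat" where
  "degree V E v = card {u \<in> V. E v u}"

definition max_degree :: "'a set \<Rightarrow> ('a \<Rightarrow> 'a \<Rightarrow> bool) \<Rightarrow> nat" where
  "max_degree V E = Max (insert 0 (degree V E ` V))"

definition nbhd :: "'a set \<Rightarrow> ('a \<Rightarrow> 'a \<Rightarrow> bool) \<Rightarrow> nat \<Rightarrow> 'a \<Rightarrow> 'a set" where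
  "nbhd V E r v = {u \<in> V. \<exists>k\<le>r. (E ^^ k) v u}"

definition nbhd_set :: "'a set \<Rightarrow> ('a \<Rightarrow> 'a \<Rightarrow> bool) \<Rightarrow> nat \<Rightarrow> 'a set \<Rightarrow> 'a set" where
  "nbhd_set V E r D = (\<Union>x\<in>D. nbhd V E r x)"

definition r_dominating :: "'a set \<Rightarrow> ('a \<Rightarrow> 'a \<Rightarrow> bool) \<Rightarrow> nat \<Rightarrow> 'a set \<Rightarrow> bool" where
  "r_dominating V E r D \<longleftrightarrow> D \<subseteq> V \<and> nbhd_set V E r D = V"

definition avg_cong :: "'a set \<Rightarrow> ('a \<Rightarrow> 'a \<Rightarrow> bool) \<Rightarrow> nat \<Rightarrow> 'a set \<Rightarrow> real" where
  "avg_cong V E r S = (\<Sum>v\<in>V. real (card (nbhd V E r v \<inter> S))) / real (card V)"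

definition mac :: "'a set \<Rightarrow> ('a \<Rightarrow> 'a \<Rightarrow> bool) \<Rightarrow> nat \<Rightarrow> real" where
  "mac V E r = Min {avg_cong V E r S | S. r_dominating V E r S}"

definition ratio_val :: "'a set \<Rightarrow> ('a \<Rightarrow> 'a \<Rightarrow> bool) \<Rightarrow> nat \<Rightarrow> 'a set \<Rightarrow> 'a \<Rightarrow> real" where
  "ratio_val V E r D v =
     real (card (nbhd V E r v - nbhd_set V E r D)) / real (card (nbhd V E r v))"

definition ratio_step :: "'a set \<Rightarrow> ('a \<Rightarrow> 'a \<Rightarrow> bool) \<Rightarrow> nat \<Rightarrow> 'a set \<Rightarrow> 'a set \<Rightarrow> bool" where
  "ratio_step V E r D D' \<longleftrightarrow> nbhd_set V E r D \<noteq> V \<and>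
     (\<exists>v\<in>V. (\<forall>w\<in>V. ratio_val V E r D w \<le> ratio_val V E r D v) \<and> D' = insert v D)"

definition ratio_output :: "'a set \<Rightarrow> ('a \<Rightarrow> 'a \<Rightarrow> bool) \<Rightarrow> nat \<Rightarrow> 'a set \<Rightarrow> bool" where
  "ratio_output V E r D \<longleftrightarrow> (ratio_step V E r)\<^sup>*\<^sup>* {} D \<and> nbhd_set V E r D = V"

end

theory Submission
  imports Defs
begin

text \<open>Fix an optimal r-dominating set S and assign every vertex to a vertex of S whose
r-neighbourhood contains it. Give x \<in> S the potential 2 |N[x]| \<surd>u, where u counts the
still uncovered vertices assigned to x. When Ratio picks v with ratio \<rho>, and c of the newly
covered vertices are assigned to x, maximality of \<rho> gives \<rho> \<ge> u / |N[x]|; hence the share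
c / \<rho> of the price |N[v]| charged to x is at most |N[x]| c / u \<le> 2 |N[x]| (\<surd>u - \<surd>(u - c)),
the drop of the potential of x. So the total price of the output, the sum of |N[v]| over v \<in> D,
is at most the initial potential, which is at most 2 \<surd>K times the sum of |N[x]| over x \<in> S,
where K \<le> 2 max(1, \<Delta>^r) bounds every |N[x]|. By double counting, the sum of |N[x]| over a
set S \<subseteq> V is |V| times the average congestion of S.\<close>

lemma simple_graphD:
  assumes "simple_graph V E"
  shows "finite V" and "E u v \<Longrightarrow> u \<in> V" and "E u v \<Longrightarrow> v \<in> V" and "E u v \<Longrightarrow> E v u"
  using assms unfolding simple_graph_def by blast+

lemma relpowp_sym:
  assumes sym: "\<And>a b. E a b \<Longrightarrow> E b a" and "(E ^^ k) v u"
  shows "(E ^^ k) u v"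
  using assms(2)
proof (induction k arbitrary: u)
  case 0
  then show ?case by simp
next
  case (Suc k)
  then obtain y where "(E ^^ k) v y" "E y u" by (blast elim: relpowp_Suc_E)
  then have "E u y" "(E ^^ k) y v" using Suc.IH sym by blast+
  then show ?case by (rule relpowp_Suc_I2)
qed

lemma nbhd_subset: "nbhd V E r v \<subseteq> V"
  unfolding nbhd_def by blast

lemma nbhd_set_subset: "nbhd_set V E r D \<subseteq> V"
  unfolding nbhd_set_def nbhd_def by blast

lemma self_in_nbhd: "v \<in> V \<Longrightarrow> v \<in> nbhd V E r v"
  unfolding nbhd_def by (auto intro: exI[of _ 0])

lemma nbhd_sym:
  assumes "simple_graph V E" "u \<in> nbhd V E r v" "v \<in> V"
  shows "v \<in> nbhd V E r u"
proof -
  obtain k where "k \<le> r" "(E ^^ k) v u" using assms(2) unfolding nbhd_def by blast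
  have "(E ^^ k) u v" using simple_graphD(4)[OF assms(1)] \<open>(E ^^ k) v u\<close> by (rule relpowp_sym)
  then show ?thesis using \<open>k \<le> r\<close> assms(3) unfolding nbhd_def by blast
qed

lemma finite_nbhd: "simple_graph V E \<Longrightarrow> finite (nbhd V E r v)"
  using nbhd_subset simple_graphD(1) finite_subset by metis

lemma card_nbhd_pos: "simple_graph V E \<Longrightarrow> v \<in> V \<Longrightarrow> card (nbhd V E r v) > 0"
  using finite_nbhd self_in_nbhd by (metis card_gt_0_iff empty_iff)

lemma r_dominating_self: "r_dominating V E r V"
  unfolding r_dominating_def nbhd_set_def
  using self_in_nbhd[of _ V E r] nbhd_subset[of V E r] by blast

lemma degree_le_max_degree: "simple_graph V E \<Longrightarrow> v \<in> V \<Longrightarrow> degree V E v \<le> max_degree V E"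
  unfolding max_degree_def using simple_graphD(1) by (intro Max_ge) auto

lemma walk_ends_subset: "v \<in> V \<Longrightarrow> simple_graph V E \<Longrightarrow> {u. (E ^^ k) v u} \<subseteq> V"
  by (cases k) (auto elim: relpowp_Suc_E dest: simple_graphD(3))

lemma card_walk_ends_le:
  assumes G: "simple_graph V E" and v: "v \<in> V"
  shows "card {u. (E ^^ k) v u} \<le> max_degree V E ^ k"
proof (induction k)
  case 0
  then show ?case by simp
next
  case (Suc k)
  let ?L = "{u. (E ^^ k) v u}"
  have L: "?L \<subseteq> V" "finite ?L"
    using walk_ends_subset[OF v G] simple_graphD(1)[OF G] finite_subset by blast+
  have "{u. (E ^^ Suc k) v u} \<subseteq> (\<Union>w\<in>?L. {u \<in> V. E w u})"
    by (auto elim: relpowp_Suc_E dest: simple_graphD(3)[OF G])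
  then have "card {u. (E ^^ Suc k) v u} \<le> card (\<Union>w\<in>?L. {u \<in> V. E w u})"
    using L simple_graphD(1)[OF G] by (intro card_mono) auto
  also have "\<dots> \<le> (\<Sum>w\<in>?L. degree V E w)"
    unfolding degree_def by (rule card_UN_le[OF L(2)])
  also have "\<dots> \<le> (\<Sum>w\<in>?L. max_degree V E)"
    by (rule sum_mono) (use degree_le_max_degree[OF G] L(1) in blast)
  also have "\<dots> = card ?L * max_degree V E" by simp
  also have "\<dots> \<le> max_degree V E ^ Suc k"
    using Suc.IH by (simp add: mult.commute)
  finally show ?case .
qed

lemma walk_end_if_max_degree_le_1:
  assumes G: "simple_graph V E" and "max_degree V E \<le> 1" and v: "v \<in> V" and "(E ^^ k) v u"
  shows "u = v \<or> E v u"
  using assms(4)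
proof (induction k arbitrary: u)
  case 0
  then show ?case by simp
next
  case (Suc k)
  then obtain y where y: "(E ^^ k) v y" "E y u" by (blast elim: relpowp_Suc_E)
  show ?case
  proof (cases "y = v")
    case False
    then have "E y v" using Suc.IH y simple_graphD(4)[OF G] by blast
    have "y \<in> V" using y(2) simple_graphD(2)[OF G] by blast
    then have "card {w \<in> V. E y w} \<le> 1"
      using degree_le_max_degree[OF G] assms(2) unfolding degree_def by fastforce
    moreover have "u \<in> {w \<in> V. E y w}" "v \<in> {w \<in> V. E y w}"
      using y(2) \<open>E y v\<close> v simple_graphD(3)[OF G] by auto
    ultimately have "u = v"
      using card_le_Suc0_iff_eq[of "{w \<in> V. E y w}"] simple_graphD(1)[OF G] by auto
    then show ?thesis by simp
  qed (use y in simp)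
qed

lemma sum_powers_le_twice_top:
  fixes d :: nat
  assumes "2 \<le> d"
  shows "(\<Sum>k\<le>r. d ^ k) \<le> 2 * d ^ r"
proof (induction r)
  case 0
  then show ?case by simp
next
  case (Suc r)
  have "2 * d ^ r \<le> d * d ^ r" using assms by simp
  moreover have "(\<Sum>k\<le>Suc r. d ^ k) = (\<Sum>k\<le>r. d ^ k) + d * d ^ r" by simp
  ultimately show ?case using Suc.IH by (simp only: power_Suc)
qed

lemma card_nbhd_le:
  assumes G: "simple_graph V E" and v: "v \<in> V"
  shows "card (nbhd V E r v) \<le> 2 * max 1 (max_degree V E ^ r)"
proof (cases "max_degree V E \<le> 1")
  case True
  \<comment> \<open>here the walk-counting bound of the other case would only give r + 1\<close>
  have fin: "finite {u \<in> V. E v u}" using simple_graphD(1)[OF G] by simp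
  have "nbhd V E r v \<subseteq> insert v {u \<in> V. E v u}"
    using walk_end_if_max_degree_le_1[OF G True v] unfolding nbhd_def by auto
  then have "card (nbhd V E r v) \<le> card (insert v {u \<in> V. E v u})"
    using fin by (intro card_mono) auto
  also have "\<dots> \<le> Suc (degree V E v)"
    unfolding degree_def using fin by (simp add: card_insert_if)
  also have "\<dots> \<le> 2" using degree_le_max_degree[OF G v] True by simp
  finally show ?thesis by simp
next
  case False
  have fin: "finite {u. (E ^^ k) v u}" for k
    using walk_ends_subset[OF v G] simple_graphD(1)[OF G] finite_subset by blast
  have "card (nbhd V E r v) \<le> card (\<Union>k\<le>r. {u. (E ^^ k) v u})"
    using fin unfolding nbhd_def by (intro card_mono) auto
  also have "\<dots> \<le> (\<Sum>k\<le>r. card {u. (E ^^ k) v u})" by (rule card_UN_le) simp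
  also have "\<dots> \<le> (\<Sum>k\<le>r. max_degree V E ^ k)"
    by (intro sum_mono card_walk_ends_le[OF G v])
  also have "\<dots> \<le> 2 * max_degree V E ^ r" using sum_powers_le_twice_top False by simp
  finally show ?thesis by simp
qed

definition cost :: "'a set \<Rightarrow> ('a \<Rightarrow> 'a \<Rightarrow> bool) \<Rightarrow> nat \<Rightarrow> 'a set \<Rightarrow> real" where
  "cost V E r D = (\<Sum>x\<in>D. real (card (nbhd V E r x)))"

lemma sum_card_nbhd_inter_eq:
  assumes G: "simple_graph V E" and S: "S \<subseteq> V"
  shows "(\<Sum>v\<in>V. card (nbhd V E r v \<inter> S)) = (\<Sum>x\<in>S. card (nbhd V E r x))"
proof -
  let ?inc = "\<lambda>v x. if v \<in> nbhd V E r x then 1 else (0::nat)"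
  have fV: "finite V" and fS: "finite S" using simple_graphD(1)[OF G] S finite_subset by blast+
  have "nbhd V E r v \<inter> S = {x \<in> S. v \<in> nbhd V E r x}" if "v \<in> V" for v
    using nbhd_sym[OF G] that S by blast
  then have "(\<Sum>v\<in>V. card (nbhd V E r v \<inter> S)) = (\<Sum>v\<in>V. \<Sum>x\<in>S. ?inc v x)"
    using fS by (intro sum.cong) (simp_all add: sum.If_cases Int_def)
  also have "\<dots> = (\<Sum>x\<in>S. \<Sum>v\<in>V. ?inc v x)" by (rule sum.swap)
  also have "\<dots> = (\<Sum>x\<in>S. card (nbhd V E r x))"
    using fV nbhd_subset[of V E r] by (intro sum.cong) (simp_all add: sum.If_cases Int_absorb1)
  finally show ?thesis .
qed

lemma avg_cong_eq_cost:
  assumes "simple_graph V E" "S \<subseteq> V"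
  shows "avg_cong V E r S = cost V E r S / real (card V)"
  unfolding avg_cong_def cost_def
  using arg_cong[OF sum_card_nbhd_inter_eq[OF assms, of r], of real] by simp

lemma avg_cong_nonneg: "avg_cong V E r S \<ge> 0"
  unfolding avg_cong_def by (simp add: sum_nonneg)

lemma mac_attained:
  assumes "simple_graph V E"
  obtains S where "r_dominating V E r S" "mac V E r = avg_cong V E r S"
proof -
  let ?M = "{avg_cong V E r S | S. r_dominating V E r S}"
  have "?M \<subseteq> avg_cong V E r ` Pow V" unfolding r_dominating_def by auto
  then have "finite ?M" using simple_graphD(1)[OF assms] finite_subset by blast
  moreover have "?M \<noteq> {}" using r_dominating_self by blast
  ultimately have "Min ?M \<in> ?M" by (rule Min_in)
  then show thesis using that unfolding mac_def by blast
qed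

subsection \<open>The potential argument\<close>

lemma share_le_sqrt_drop:
  fixes c u :: nat and n \<rho> :: real
  assumes cu: "c \<le> u" and n: "0 < n" and \<rho>: "real u / n \<le> \<rho>" "0 < \<rho>"
  shows "real c / \<rho> \<le> 2 * n * (sqrt u - sqrt (real u - real c))"
proof (cases "c = 0")
  case False
  define a b where "a = sqrt u" and "b = sqrt (real u - real c)"
  have u: "1 \<le> real u" using False cu by simp
  have a: "1 \<le> a" "a * a = u" using u unfolding a_def by simp_all
  have b: "0 \<le> b" "b \<le> a" "b * b = real u - real c"
    using cu unfolding a_def b_def by (simp_all add: real_sqrt_le_mono)
  have "real c = (a - b) * (a + b)" using a b by (simp add: algebra_simps)
  also have "\<dots> \<le> (a - b) * (2 * (a * a))"
  proof (rule mult_left_mono)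
    have "a * 1 \<le> a * a" using a by (intro mult_left_mono) auto
    then show "a + b \<le> 2 * (a * a)" using b by linarith
  qed (use b in simp)
  finally have "real c / real u \<le> 2 * (a - b)"
    using a(2) u by (simp add: pos_divide_le_eq mult_ac)
  have "real c / \<rho> \<le> real c / (real u / n)"
    using \<rho> u n by (intro divide_left_mono) auto
  also have "\<dots> = n * (real c / real u)" by simp
  also have "\<dots> \<le> n * (2 * (a - b))"
    using \<open>real c / real u \<le> 2 * (a - b)\<close> n by (intro mult_left_mono) auto
  finally show ?thesis unfolding a_def b_def by (simp add: algebra_simps)
qed simp

definition uncovered :: "'a set \<Rightarrow> ('a \<Rightarrow> 'a \<Rightarrow> bool) \<Rightarrow> nat \<Rightarrow> 'a set \<Rightarrow> 'a set" where
  "uncovered V E r D = V - nbhd_set V E r D"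

definition dominator :: "'a set \<Rightarrow> ('a \<Rightarrow> 'a \<Rightarrow> bool) \<Rightarrow> nat \<Rightarrow> 'a set \<Rightarrow> 'a \<Rightarrow> 'a" where
  "dominator V E r S e = (SOME x. x \<in> S \<and> e \<in> nbhd V E r x)"

definition assigned :: "'a set \<Rightarrow> ('a \<Rightarrow> 'a \<Rightarrow> bool) \<Rightarrow> nat \<Rightarrow> 'a set \<Rightarrow> 'a \<Rightarrow> 'a set" where
  "assigned V E r S x = {e \<in> V. dominator V E r S e = x}"

definition potential :: "'a set \<Rightarrow> ('a \<Rightarrow> 'a \<Rightarrow> bool) \<Rightarrow> nat \<Rightarrow> 'a set \<Rightarrow> 'a set \<Rightarrow> real" where
  "potential V E r S D = (\<Sum>x\<in>S. 2 * real (card (nbhd V E r x)) *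
     sqrt (real (card (assigned V E r S x \<inter> uncovered V E r D))))"

lemma dominator:
  assumes "r_dominating V E r S" "e \<in> V"
  shows "dominator V E r S e \<in> S" and "e \<in> nbhd V E r (dominator V E r S e)"
proof -
  have "\<exists>x. x \<in> S \<and> e \<in> nbhd V E r x"
    using assms unfolding r_dominating_def nbhd_set_def by blast
  then have "dominator V E r S e \<in> S \<and> e \<in> nbhd V E r (dominator V E r S e)"
    unfolding dominator_def by (rule someI_ex)
  then show "dominator V E r S e \<in> S" "e \<in> nbhd V E r (dominator V E r S e)" by blast+
qed

lemma assigned_subset_nbhd:
  assumes "r_dominating V E r S"
  shows "assigned V E r S x \<subseteq> nbhd V E r x"
  unfolding assigned_def using dominator(2)[OF assms] by blast

lemma card_eq_sum_card_assigned:
  assumes G: "simple_graph V E" and S: "r_dominating V E r S" and A: "A \<subseteq> V"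
  shows "card A = (\<Sum>x\<in>S. card (assigned V E r S x \<inter> A))"
proof -
  have fin: "finite A" "finite S"
    using A S simple_graphD(1)[OF G] finite_subset unfolding r_dominating_def by blast+
  have "dominator V E r S ` A \<subseteq> S" using dominator(1)[OF S] A by blast
  then have "(\<Sum>x\<in>S. card {e \<in> A. dominator V E r S e = x}) = card A"
    using sum.group[OF fin, of "dominator V E r S" "\<lambda>_. 1::nat"] by simp
  moreover have "{e \<in> A. dominator V E r S e = x} = assigned V E r S x \<inter> A" for x
    using A unfolding assigned_def by blast
  ultimately show ?thesis by simp
qed

lemma uncovered_insert: "uncovered V E r (insert v D) = uncovered V E r D - nbhd V E r v"
  unfolding uncovered_def nbhd_set_def by blast

lemma ratio_val_pos:
  assumes G: "simple_graph V E" and "e \<in> uncovered V E r D"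
  shows "ratio_val V E r D e > 0"
proof -
  have e: "e \<in> V" "e \<notin> nbhd_set V E r D" using assms(2) unfolding uncovered_def by blast+
  then have "e \<in> nbhd V E r e - nbhd_set V E r D" using self_in_nbhd[OF e(1)] by blast
  then have "card (nbhd V E r e - nbhd_set V E r D) > 0"
    using finite_nbhd[OF G, of r e] by (auto simp: card_gt_0_iff)
  then show ?thesis using card_nbhd_pos[OF G e(1)] unfolding ratio_val_def by simp
qed

lemma ratio_val_eq_0: "v \<in> D \<Longrightarrow> ratio_val V E r D v = 0"
proof -
  assume "v \<in> D"
  then have "nbhd V E r v - nbhd_set V E r D = {}" unfolding nbhd_set_def by blast
  then show ?thesis by (simp only: ratio_val_def card.empty of_nat_0 div_0)
qed

lemma card_assigned_uncovered_le_ratio_val: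
  assumes G: "simple_graph V E" and S: "r_dominating V E r S"
  shows "real (card (assigned V E r S x \<inter> uncovered V E r D)) / real (card (nbhd V E r x))
    \<le> ratio_val V E r D x"
proof -
  have "assigned V E r S x \<inter> uncovered V E r D \<subseteq> nbhd V E r x - nbhd_set V E r D"
    using assigned_subset_nbhd[OF S] unfolding uncovered_def by blast
  then have "card (assigned V E r S x \<inter> uncovered V E r D) \<le> card (nbhd V E r x - nbhd_set V E r D)"
    using finite_nbhd[OF G] by (intro card_mono) auto
  then show ?thesis unfolding ratio_val_def by (simp add: divide_right_mono)
qed

lemma greedy_price_le_potential_drop:
  assumes G: "simple_graph V E" and S: "r_dominating V E r S" and v: "v \<in> V"
    and max: "\<forall>w\<in>V. ratio_val V E r D w \<le> ratio_val V E r D v"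
    and pos: "ratio_val V E r D v > 0"
  shows "real (card (nbhd V E r v)) \<le> potential V E r S D - potential V E r S (insert v D)"
proof -
  let ?A = "assigned V E r S" and ?U = "uncovered V E r D" and ?\<rho> = "ratio_val V E r D v"
  define New where "New = nbhd V E r v \<inter> ?U"
  define c where "c x = card (?A x \<inter> New)" for x
  define u where "u x = card (?A x \<inter> ?U)" for x
  have fin_A: "finite (?A x)" for x
    using simple_graphD(1)[OF G] unfolding assigned_def by simp
  have cu: "c x \<le> u x" for x
    unfolding c_def u_def New_def using fin_A by (intro card_mono) auto
  have u_insert: "card (?A x \<inter> uncovered V E r (insert v D)) = u x - c x" for x
  proof -
    have "?A x \<inter> uncovered V E r (insert v D) = (?A x \<inter> ?U) - (?A x \<inter> New)"
      unfolding uncovered_insert New_def by blast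
    moreover have "?A x \<inter> New \<subseteq> ?A x \<inter> ?U" unfolding New_def by blast
    ultimately show ?thesis
      unfolding u_def c_def using fin_A[of x] by (simp add: card_Diff_subset)
  qed
  have "nbhd V E r v - nbhd_set V E r D = New"
    unfolding New_def uncovered_def using nbhd_subset[of V E r v] by blast
  then have "?\<rho> = real (card New) / real (card (nbhd V E r v))"
    unfolding ratio_val_def by simp
  then have "real (card (nbhd V E r v)) = real (card New) / ?\<rho>"
    using pos card_nbhd_pos[OF G v] by (simp add: field_simps)
  also have "\<dots> = (\<Sum>x\<in>S. real (c x) / ?\<rho>)"
  proof -
    have "New \<subseteq> V" unfolding New_def uncovered_def by blast
    then have "card New = (\<Sum>x\<in>S. c x)" unfolding c_def by (rule card_eq_sum_card_assigned[OF G S])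
    then show ?thesis by (simp add: sum_divide_distrib)
  qed
  also have "\<dots> \<le> (\<Sum>x\<in>S. 2 * real (card (nbhd V E r x)) * (sqrt (u x) - sqrt (real (u x) - real (c x))))"
  proof (rule sum_mono)
    fix x assume "x \<in> S"
    then have "x \<in> V" using S unfolding r_dominating_def by blast
    have "real (u x) / real (card (nbhd V E r x)) \<le> ?\<rho>"
      using card_assigned_uncovered_le_ratio_val[OF G S, of x D] max \<open>x \<in> V\<close> unfolding u_def by fastforce
    then show "real (c x) / ?\<rho> \<le> 2 * real (card (nbhd V E r x)) * (sqrt (u x) - sqrt (real (u x) - real (c x)))"
      using share_le_sqrt_drop[OF cu] card_nbhd_pos[OF G \<open>x \<in> V\<close>] pos by simp
  qed
  also have "\<dots> = potential V E r S D - potential V E r S (insert v D)"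
    unfolding potential_def u_insert using cu
    by (simp add: u_def of_nat_diff sum_subtractf right_diff_distrib)
  finally show ?thesis .
qed

lemma ratio_run_subset: "(ratio_step V E r)\<^sup>*\<^sup>* {} D \<Longrightarrow> D \<subseteq> V"
  by (induction rule: rtranclp_induct) (auto simp: ratio_step_def)

lemma ratio_run_cost_le_potential:
  assumes G: "simple_graph V E" and S: "r_dominating V E r S"
    and "(ratio_step V E r)\<^sup>*\<^sup>* {} D"
  shows "cost V E r D + potential V E r S D \<le> potential V E r S {}"
  using assms(3)
proof (induction rule: rtranclp_induct)
  case base
  then show ?case by (simp add: cost_def)
next
  case (step D D')
  then obtain v where v: "v \<in> V" "D' = insert v D"
    and max: "\<forall>w\<in>V. ratio_val V E r D w \<le> ratio_val V E r D v"
    and "nbhd_set V E r D \<noteq> V"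
    unfolding ratio_step_def by blast
  then obtain e where e: "e \<in> uncovered V E r D"
    using nbhd_set_subset[of V E r D] unfolding uncovered_def by blast
  then have "e \<in> V" unfolding uncovered_def by blast
  then have pos: "ratio_val V E r D v > 0"
    using ratio_val_pos[OF G e] max by fastforce
  then have "v \<notin> D" using ratio_val_eq_0[of v D V E r] by linarith
  moreover have "finite D"
    using ratio_run_subset[OF step.hyps(1)] simple_graphD(1)[OF G] by (rule finite_subset)
  ultimately have "cost V E r D' = cost V E r D + real (card (nbhd V E r v))"
    unfolding cost_def v(2) by simp
  then show ?case
    using greedy_price_le_potential_drop[OF G S v(1) max pos] step.IH unfolding v(2) by linarith
qed

lemma potential_nonneg: "potential V E r S D \<ge> 0"
  unfolding potential_def by (intro sum_nonneg) simp

lemma potential_empty_le: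
  assumes G: "simple_graph V E" and S: "r_dominating V E r S"
    and K: "\<forall>x\<in>V. card (nbhd V E r x) \<le> K"
  shows "potential V E r S {} \<le> 2 * sqrt (real K) * cost V E r S"
proof -
  have "sqrt (real (card (assigned V E r S x \<inter> uncovered V E r {}))) \<le> sqrt (real K)"
    if "x \<in> S" for x
  proof -
    have "card (assigned V E r S x \<inter> uncovered V E r {}) \<le> card (nbhd V E r x)"
      using assigned_subset_nbhd[OF S] finite_nbhd[OF G] by (intro card_mono) auto
    also have "\<dots> \<le> K" using K that S unfolding r_dominating_def by blast
    finally show ?thesis by simp
  qed
  then have "potential V E r S {} \<le> (\<Sum>x\<in>S. 2 * real (card (nbhd V E r x)) * sqrt (real K))"
    unfolding potential_def by (intro sum_mono mult_left_mono) auto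
  then show ?thesis unfolding cost_def by (simp add: sum_distrib_left sum_distrib_right mult_ac)
qed

lemma ratio_output_r_dominating: "ratio_output V E r D \<Longrightarrow> r_dominating V E r D"
  unfolding ratio_output_def r_dominating_def using ratio_run_subset by blast

lemma ratio_output_avg_cong_le:
  assumes G: "simple_graph V E" and D: "ratio_output V E r D" and S: "r_dominating V E r S"
  shows "avg_cong V E r D \<le> 2 * sqrt (2 * max 1 (real (max_degree V E) ^ r)) * avg_cong V E r S"
proof -
  define K where "K = 2 * max 1 (max_degree V E ^ r)"
  have run: "(ratio_step V E r)\<^sup>*\<^sup>* {} D" using D unfolding ratio_output_def by blast
  have "cost V E r D \<le> potential V E r S {}"
    using ratio_run_cost_le_potential[OF G S run] potential_nonneg[of V E r S D] by linarith
  also have "\<dots> \<le> 2 * sqrt (real K) * cost V E r S"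
    by (rule potential_empty_le[OF G S]) (use card_nbhd_le[OF G] in \<open>simp add: K_def\<close>)
  finally have "cost V E r D / real (card V) \<le> 2 * sqrt (real K) * cost V E r S / real (card V)"
    by (rule divide_right_mono) simp
  moreover have "real K = 2 * max 1 (real (max_degree V E) ^ r)" by (simp add: K_def of_nat_max)
  moreover have "D \<subseteq> V" "S \<subseteq> V"
    using ratio_run_subset[OF run] S unfolding r_dominating_def by blast+
  ultimately show ?thesis by (simp add: avg_cong_eq_cost[OF G])
qed

lemma twice_sqrt_twice_max_le:
  fixes m :: real
  shows "2 * sqrt (2 * max 1 m) \<le> 4 * max 1 (sqrt m)"
proof -
  have "sqrt (2 * max 1 m) = sqrt 2 * max 1 (sqrt m)"
    by (cases "1 \<le> m") (auto simp: max_def real_sqrt_mult)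
  also have "\<dots> \<le> 2 * max 1 (sqrt m)"
    using sqrt2_less_2 by (intro mult_right_mono) auto
  finally show ?thesis by simp
qed

theorem mainTheorem8:
  "\<exists>C::real. C > 0 \<and>
     (\<forall>(V::nat set) E r D. simple_graph V E \<and> r \<ge> 1 \<and> ratio_output V E r D \<longrightarrow>
        r_dominating V E r D \<and>
        avg_cong V E r D \<le> C * max 1 (sqrt (real (max_degree V E) ^ r)) * mac V E r)"
proof (intro exI[of _ 4] conjI allI impI)
  fix V :: "nat set" and E r D
  assume "simple_graph V E \<and> r \<ge> 1 \<and> ratio_output V E r D"
  then have G: "simple_graph V E" and D: "ratio_output V E r D" by blast+
  show "r_dominating V E r D" using D by (rule ratio_output_r_dominating)
  obtain S where S: "r_dominating V E r S" "mac V E r = avg_cong V E r S"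
    using mac_attained[OF G] .
  have "avg_cong V E r D \<le> 2 * sqrt (2 * max 1 (real (max_degree V E) ^ r)) * avg_cong V E r S"
    by (rule ratio_output_avg_cong_le[OF G D S(1)])
  also have "\<dots> \<le> 4 * max 1 (sqrt (real (max_degree V E) ^ r)) * mac V E r"
    unfolding S(2) by (intro mult_right_mono twice_sqrt_twice_max_le avg_cong_nonneg)
  finally show "avg_cong V E r D \<le> 4 * max 1 (sqrt (real (max_degree V E) ^ r)) * mac V E r" .
qed simp

end
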